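(* Let $G=(V,E)$ be a directed acyclic graph under the LT model with edge weights $w$ satisfying $\sum_{x\in\mathrm{In}(v)}w_{(x,v)}\le1$ for every $v\in V$, and let $L$ be the length of a longest directed path in $G$. Taking $p_{(x,y)}=w_{(x,y)}$ in the EaSyIM recursion, for every $l\ge L$ and every $u\in V$ the EaSyIM score satisfies $\Delta^l(u)=\sigma(\{u\})$; equivalently, $\sigma(\{u\})=\sum_{\rho}\prod_{e\in\rho}w_e$, the sum ranging over all directed paths $\rho$ of length at least $1$ starting at $u$.
   Context: LT model: each node $v$ draws a threshold $\theta_v$ uniformly from $[0,1]$; seeds are active initially, and an inactive $v$ becomes active once $\sum_{u\in\mathrm{In}(v),\,u\text{ active}}w_{(u,v)}\ge\theta_v$; active nodes stay active. $\sigma(S)$ denotes the expected number of active nodes at the end of the process that are not in $S$. EaSyIM score: $\Delta^0(u)=0$ for all $u$, and for $i\ge1$, $\Delta^i(u)=\sum_{v\in\mathrm{Out}(u)}p_{(u,v)}\big(1+\Delta^{i-1}(v)\big)$, where $\mathrm{Out}(u)$ is the set of out-neighbours of $u$ and $\mathrm{In}(v)$ the set of in-neighbours of $v$. *)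

theory Defs
  imports "HOL-Probability.Probability"
begin

definition In_nbrs :: "('a \<times> 'a) set \<Rightarrow> 'a \<Rightarrow> 'a set" where
  "In_nbrs E v = {x. (x, v) \<in> E}"

definition Out_nbrs :: "('a \<times> 'a) set \<Rightarrow> 'a \<Rightarrow> 'a set" where
  "Out_nbrs E u = {y. (u, y) \<in> E}"

definition lt_step :: "'a set \<Rightarrow> ('a \<times> 'a) set \<Rightarrow> ('a \<times> 'a \<Rightarrow> real)
    \<Rightarrow> ('a \<Rightarrow> real) \<Rightarrow> 'a set \<Rightarrow> 'a set" where
  "lt_step V E w \<theta> A =
     A \<union> {v \<in> V. (\<Sum>u \<in> In_nbrs E v \<inter> A. w (u, v)) \<ge> \<theta> v}"

definition lt_final :: "'a set \<Rightarrow> ('a \<times> 'a) set \<Rightarrow> ('a \<times> 'a \<Rightarrow> real)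
    \<Rightarrow> 'a set \<Rightarrow> ('a \<Rightarrow> real) \<Rightarrow> 'a set" where
  "lt_final V E w S \<theta> = (\<Union>t. (lt_step V E w \<theta> ^^ t) S)"

definition threshold_space :: "'a set \<Rightarrow> ('a \<Rightarrow> real) measure" where
  "threshold_space V = PiM V (\<lambda>_. uniform_measure lborel {0..1::real})"

definition lt_sigma :: "'a set \<Rightarrow> ('a \<times> 'a) set \<Rightarrow> ('a \<times> 'a \<Rightarrow> real)
    \<Rightarrow> 'a set \<Rightarrow> real" where
  "lt_sigma V E w S =
     (\<integral>\<theta>. real (card (lt_final V E w S \<theta> - S)) \<partial>threshold_space V)"

primrec easyim :: "('a \<times> 'a) set \<Rightarrow> ('a \<times> 'a \<Rightarrow> real) \<Rightarrow> nat \<Rightarrow> 'a \<Rightarrow> real" where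
  "easyim E p 0 u = 0"
| "easyim E p (Suc i) u = (\<Sum>v \<in> Out_nbrs E u. p (u, v) * (1 + easyim E p i v))"

definition dpath :: "('a \<times> 'a) set \<Rightarrow> 'a list \<Rightarrow> bool" where
  "dpath E xs \<longleftrightarrow> xs \<noteq> [] \<and> (\<forall>i. Suc i < length xs \<longrightarrow> (xs ! i, xs ! Suc i) \<in> E)"

definition longest_path_length :: "('a \<times> 'a) set \<Rightarrow> nat" where
  "longest_path_length E = Max {length xs - 1 | xs. dpath E xs}"

definition path_weight :: "('a \<times> 'a \<Rightarrow> real) \<Rightarrow> 'a list \<Rightarrow> real" where
  "path_weight w xs = (\<Prod>i < length xs - 1. w (xs ! i, xs ! Suc i))"

end

theory Submission
  imports Defs
begin

text \<open>On an acyclic graph the LT process is a deterministic function of the thresholds in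
which a node v outside the seed set activates exactly when its threshold is at most the total
weight of its active in-neighbours. That weight only depends on the thresholds of proper
ancestors of v, hence is independent of the threshold of v; integrating that threshold out
first shows that the activation probabilities satisfy a(v) = \<Sum>x w(x,v) a(x) with a(u) = 1,
whose solution on a DAG is the total weight of the paths from u to v. Summing over v gives
sigma({u}) as the total weight of all nontrivial paths from u. Unfolding the EaSyIM recursion
l times yields the total weight of the paths from u with at most l edges, which are all of them
once l is at least the length of a longest path.\<close>

section \<open>Directed paths\<close>

lemma dpath_not_Nil: "dpath E xs \<Longrightarrow> xs \<noteq> []"
  by (simp add: dpath_def)

lemma singleton_or_length_ge_2: "xs \<noteq> [] \<Longrightarrow> xs = [hd xs] \<or> 2 \<le> length xs"
  by (cases xs; cases "tl xs") auto

lemma dpath_singleton [simp]: "dpath E [x]"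
  by (simp add: dpath_def)

lemma path_weight_singleton [simp]: "path_weight w [x] = 1"
  by (simp add: path_weight_def)

lemma dpath_Cons: "dpath E (x # ys) \<longleftrightarrow> ys = [] \<or> (x, hd ys) \<in> E \<and> dpath E ys"
proof (cases ys)
  case (Cons y zs)
  have "dpath E (x # y # zs) \<longleftrightarrow> (x, y) \<in> E \<and> dpath E (y # zs)"
    unfolding dpath_def by (auto simp: nth_Cons split: nat.splits)
  then show ?thesis using Cons by simp
qed simp

lemma dpath_snoc: "dpath E (xs @ [v]) \<longleftrightarrow> xs = [] \<or> dpath E xs \<and> (last xs, v) \<in> E"
  by (induction xs) (auto simp: dpath_Cons)

lemma path_weight_Cons: "ys \<noteq> [] \<Longrightarrow> path_weight w (x # ys) = w (x, hd ys) * path_weight w ys"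
  unfolding path_weight_def
  by (cases ys) (simp_all add: prod.lessThan_Suc_shift del: prod.lessThan_Suc)

lemma path_weight_snoc: "xs \<noteq> [] \<Longrightarrow> path_weight w (xs @ [v]) = path_weight w xs * w (last xs, v)"
  by (induction xs rule: list_nonempty_induct) (auto simp: path_weight_Cons)

lemma dpath_nth_trancl:
  "dpath E xs \<Longrightarrow> i < j \<Longrightarrow> j < length xs \<Longrightarrow> (xs ! i, xs ! j) \<in> E\<^sup>+"
proof (induction j)
  case (Suc j)
  have "(xs ! j, xs ! Suc j) \<in> E" using Suc.prems unfolding dpath_def by blast
  then show ?case using Suc by (cases "i = j") auto
qed simp

lemma dpath_distinct: "acyclic E \<Longrightarrow> dpath E xs \<Longrightarrow> distinct xs"
  unfolding distinct_conv_nth acyclic_def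
  by (metis dpath_nth_trancl linorder_neqE_nat)

lemma dpath_last_neq_hd:
  assumes "acyclic E" "dpath E xs" "2 \<le> length xs"
  shows "last xs \<noteq> hd xs"
proof -
  have "xs \<noteq> []" using assms(3) by auto
  moreover have "(xs ! 0, xs ! (length xs - 1)) \<in> E\<^sup>+"
    using assms(2,3) by (intro dpath_nth_trancl) auto
  ultimately show ?thesis
    using assms(1) by (auto simp: acyclic_def hd_conv_nth last_conv_nth)
qed

lemma dpath_set_Field: "dpath E xs \<Longrightarrow> 2 \<le> length xs \<Longrightarrow> set xs \<subseteq> Field E"
proof
  fix x assume path: "dpath E xs" and len: "2 \<le> length xs" and "x \<in> set xs"
  then obtain i where i: "i < length xs" "xs ! i = x" by (auto simp: in_set_conv_nth)
  show "x \<in> Field E"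
  proof (cases "Suc i < length xs")
    case True then show ?thesis using path i unfolding dpath_def by (blast intro: FieldI1)
  next
    case False
    then have "Suc (i - 1) = i" using len i by auto
    then show ?thesis using path i unfolding dpath_def by (metis FieldI2)
  qed
qed

lemma finite_dpaths_length_le:
  assumes "finite E"
  shows "finite {xs. dpath E xs \<and> 2 \<le> length xs \<and> length xs \<le> n}"
proof (rule finite_subset)
  show "finite {xs. set xs \<subseteq> Field E \<and> length xs \<le> n}"
    by (rule finite_lists_length_le) (simp add: assms finite_Field)
qed (use dpath_set_Field in blast)

lemma dpath_length_le_card_Field:
  assumes "finite E" "acyclic E" "dpath E xs" "2 \<le> length xs"
  shows "length xs \<le> card (Field E)"
  using assms dpath_set_Field[of E xs] dpath_distinct[of E xs]
  by (metis card_mono distinct_card finite_Field)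

lemma finite_dpaths:
  assumes "finite E" "acyclic E"
  shows "finite {xs. dpath E xs \<and> 2 \<le> length xs}"
  by (rule finite_subset[OF _ finite_dpaths_length_le[OF assms(1), of "card (Field E)"]])
    (use dpath_length_le_card_Field[OF assms] in blast)

lemma dpath_length_le_longest:
  assumes "finite E" "acyclic E" "dpath E xs"
  shows "length xs - 1 \<le> longest_path_length E"
proof -
  have "{length xs - 1 | xs. dpath E xs} \<subseteq> {..card (Field E)}"
    using dpath_length_le_card_Field[OF assms(1,2)] by fastforce
  then have "finite {length xs - 1 | xs. dpath E xs}" using finite_subset by blast
  then show ?thesis unfolding longest_path_length_def using assms(3) by (intro Max_ge) auto
qed

lemma finite_Out_nbrs: "finite E \<Longrightarrow> finite (Out_nbrs E x)"
  unfolding Out_nbrs_def by (rule finite_subset[of _ "snd ` E"]) force+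

lemma finite_In_nbrs: "finite E \<Longrightarrow> finite (In_nbrs E x)"
  unfolding In_nbrs_def by (rule finite_subset[of _ "fst ` E"]) force+

definition paths_from :: "('a \<times> 'a) set \<Rightarrow> 'a \<Rightarrow> 'a list set" where
  "paths_from E x = {xs. dpath E xs \<and> hd xs = x \<and> 2 \<le> length xs}"

definition paths_between :: "('a \<times> 'a) set \<Rightarrow> 'a \<Rightarrow> 'a \<Rightarrow> 'a list set" where
  "paths_between E x y = {xs. dpath E xs \<and> hd xs = x \<and> last xs = y}"

section \<open>EaSyIM scores as path weights\<close>

lemma paths_from_length_le_Suc:
  "{xs \<in> paths_from E x. length xs \<le> Suc (Suc k)} =
     (\<lambda>(v, ys). x # ys) ` Sigma (Out_nbrs E x) (\<lambda>v. insert [v] {ys \<in> paths_from E v. length ys \<le> Suc k})"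
  (is "?lhs = ?rhs")
proof
  show "?rhs \<subseteq> ?lhs"
    by (auto simp: paths_from_def dpath_Cons Out_nbrs_def)
  show "?lhs \<subseteq> ?rhs"
  proof
    fix zs assume zs: "zs \<in> ?lhs"
    then obtain ys where ys: "zs = x # ys" "ys \<noteq> []"
      by (cases zs) (auto simp: paths_from_def Suc_le_eq)
    then have "(x, hd ys) \<in> E" "dpath E ys" "length ys \<le> Suc k"
      using zs by (auto simp: paths_from_def dpath_Cons)
    moreover have "ys = [hd ys] \<or> 2 \<le> length ys"
      using ys(2) by (rule singleton_or_length_ge_2)
    ultimately have "(hd ys, ys) \<in> Sigma (Out_nbrs E x) (\<lambda>v. insert [v] {ys \<in> paths_from E v. length ys \<le> Suc k})"
      by (auto simp: paths_from_def Out_nbrs_def)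
    then show "zs \<in> ?rhs" using ys by force
  qed
qed

lemma easyim_eq_sum_paths:
  assumes "finite E"
  shows "easyim E p k x = (\<Sum>xs \<in> {xs \<in> paths_from E x. length xs \<le> Suc k}. path_weight p xs)"
proof (induction k arbitrary: x)
  case 0
  have empty: "{xs \<in> paths_from E x. length xs \<le> Suc 0} = {}" by (auto simp: paths_from_def)
  show ?case by (simp only: empty) simp
next
  case (Suc k)
  let ?short = "\<lambda>v. {ys \<in> paths_from E v. length ys \<le> Suc k}"
  have fin_short: "finite (?short v)" for v
    by (rule finite_subset[OF _ finite_dpaths_length_le[OF assms, of "Suc k"]])
      (auto simp: paths_from_def)
  have "p (x, v) * (1 + easyim E p k v) = (\<Sum>ys \<in> insert [v] (?short v). path_weight p (x # ys))" for v
  proof -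
    have "path_weight p (x # ys) = p (x, v) * path_weight p ys" if "ys \<in> ?short v" for ys
      using that by (subst path_weight_Cons) (auto simp: paths_from_def)
    moreover have "[v] \<notin> ?short v" by (simp add: paths_from_def)
    ultimately show ?thesis
      using fin_short by (simp add: Suc path_weight_Cons sum_distrib_left distrib_left)
  qed
  then have "easyim E p (Suc k) x =
      (\<Sum>v \<in> Out_nbrs E x. \<Sum>ys \<in> insert [v] (?short v). path_weight p (x # ys))"
    by simp
  also have "\<dots> = (\<Sum>(v, ys) \<in> Sigma (Out_nbrs E x) (\<lambda>v. insert [v] (?short v)). path_weight p (x # ys))"
    by (rule sum.Sigma) (use finite_Out_nbrs[OF assms] fin_short in auto)
  also have "\<dots> = (\<Sum>xs \<in> {xs \<in> paths_from E x. length xs \<le> Suc (Suc k)}. path_weight p xs)"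
    unfolding paths_from_length_le_Suc
    by (subst sum.reindex) (auto simp: inj_on_def paths_from_def case_prod_beta)
  finally show ?case .
qed

lemma easyim_eq_sum_paths_from:
  assumes "finite E" "acyclic E" "longest_path_length E \<le> l"
  shows "easyim E p l x = (\<Sum>xs \<in> paths_from E x. path_weight p xs)"
proof -
  have "length xs \<le> Suc l" if "xs \<in> paths_from E x" for xs
    using that dpath_length_le_longest[OF assms(1,2), of xs] assms(3) by (simp add: paths_from_def)
  then have "{xs \<in> paths_from E x. length xs \<le> Suc l} = paths_from E x"
    by blast
  then show ?thesis
    by (simp only: easyim_eq_sum_paths[OF assms(1)])
qed

lemma paths_between_self:
  assumes "acyclic E"
  shows "paths_between E x x = {[x]}"
proof
  show "paths_between E x x \<subseteq> {[x]}"
  proof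
    fix xs assume "xs \<in> paths_between E x x"
    then have "dpath E xs" "hd xs = x" "last xs = x" by (auto simp: paths_between_def)
    then have "\<not> 2 \<le> length xs" using dpath_last_neq_hd[OF assms] by auto
    then have "xs = [hd xs]"
      using singleton_or_length_ge_2[OF dpath_not_Nil[OF \<open>dpath E xs\<close>]] by simp
    then show "xs \<in> {[x]}" using \<open>hd xs = x\<close> by simp
  qed
qed (simp add: paths_between_def)

lemma finite_paths_between:
  assumes "finite E" "acyclic E"
  shows "finite (paths_between E x y)"
proof (rule finite_subset)
  show "paths_between E x y \<subseteq> {[x]} \<union> {xs. dpath E xs \<and> 2 \<le> length xs}"
  proof
    fix xs assume "xs \<in> paths_between E x y"
    then have "dpath E xs" "hd xs = x" by (auto simp: paths_between_def)
    then show "xs \<in> {[x]} \<union> {xs. dpath E xs \<and> 2 \<le> length xs}"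
      using singleton_or_length_ge_2[OF dpath_not_Nil] by auto
  qed
  show "finite ({[x]} \<union> {xs. dpath E xs \<and> 2 \<le> length xs})"
    using finite_dpaths[OF assms] by simp
qed

lemma paths_between_snoc:
  assumes "y \<noteq> x"
  shows "paths_between E x y = (\<lambda>(z, xs). xs @ [y]) ` Sigma (In_nbrs E y) (paths_between E x)"
    (is "?lhs = ?rhs")
proof
  show "?rhs \<subseteq> ?lhs"
  proof clarify
    fix z xs assume "z \<in> In_nbrs E y" "xs \<in> paths_between E x z"
    moreover from this have "xs \<noteq> []" by (auto simp: paths_between_def dest: dpath_not_Nil)
    ultimately show "xs @ [y] \<in> ?lhs" by (simp add: paths_between_def dpath_snoc In_nbrs_def)
  qed
  show "?lhs \<subseteq> ?rhs"
  proof
    fix zs assume "zs \<in> ?lhs"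
    then have path: "dpath E zs" "hd zs = x" "last zs = y" by (auto simp: paths_between_def)
    define ys where "ys = butlast zs"
    have zs_eq: "zs = ys @ [y]"
      using dpath_not_Nil[OF path(1)] path(3) unfolding ys_def by (metis append_butlast_last_id)
    have "ys \<noteq> []"
    proof
      assume "ys = []"
      then show False using zs_eq path(2) assms by simp
    qed
    then have "(last ys, ys) \<in> Sigma (In_nbrs E y) (paths_between E x)"
      using path unfolding zs_eq by (simp add: dpath_snoc paths_between_def In_nbrs_def)
    then show "zs \<in> ?rhs" unfolding zs_eq by (rule rev_image_eqI) simp
  qed
qed

lemma sum_paths_between_snoc:
  assumes "finite E" "acyclic E" "y \<noteq> x"
  shows "(\<Sum>xs \<in> paths_between E x y. path_weight w xs) =
         (\<Sum>z \<in> In_nbrs E y. w (z, y) * (\<Sum>xs \<in> paths_between E x z. path_weight w xs))"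
proof -
  have "w (z, y) * (\<Sum>xs \<in> paths_between E x z. path_weight w xs) =
        (\<Sum>xs \<in> paths_between E x z. path_weight w (xs @ [y]))" for z
    unfolding sum_distrib_left
    by (rule sum.cong) (auto simp: paths_between_def dpath_def path_weight_snoc)
  then have "(\<Sum>z \<in> In_nbrs E y. w (z, y) * (\<Sum>xs \<in> paths_between E x z. path_weight w xs)) =
      (\<Sum>(z, xs) \<in> Sigma (In_nbrs E y) (paths_between E x). path_weight w (xs @ [y]))"
    by (simp add: sum.Sigma finite_In_nbrs finite_paths_between assms)
  also have "\<dots> = (\<Sum>xs \<in> paths_between E x y. path_weight w xs)"
    unfolding paths_between_snoc[OF assms(3)]
    by (subst sum.reindex) (auto simp: inj_on_def paths_between_def case_prod_beta)
  finally show ?thesis by (rule sym)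
qed

lemma paths_between_eq_paths_from_last:
  assumes "y \<noteq> x"
  shows "paths_between E x y = {xs \<in> paths_from E x. last xs = y}"
proof -
  have "2 \<le> length xs" if "dpath E xs" "hd xs = x" "last xs = y" for xs
    using that assms singleton_or_length_ge_2[OF dpath_not_Nil] by (metis last.simps)
  then show ?thesis by (auto simp: paths_between_def paths_from_def)
qed

lemma sum_paths_from_by_last:
  assumes "finite V" "E \<subseteq> V \<times> V" "acyclic E"
  shows "(\<Sum>xs \<in> paths_from E x. path_weight w xs) =
         (\<Sum>y \<in> V - {x}. \<Sum>xs \<in> paths_between E x y. path_weight w xs)"
proof -
  have finE: "finite E" using assms(1,2) finite_subset by blast
  have last: "last xs \<in> V - {x}" if xs: "xs \<in> paths_from E x" for xs
  proof -
    have path: "dpath E xs" "hd xs = x" "2 \<le> length xs"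
      using xs by (auto simp: paths_from_def)
    then have "last xs \<noteq> x" using dpath_last_neq_hd[OF assms(3) path(1,3)] by simp
    moreover have "last xs \<in> Field E"
      using dpath_set_Field[OF path(1,3)] dpath_not_Nil[OF path(1)] by auto
    moreover have "Field E \<subseteq> V" using assms(2) by (auto simp: Field_def)
    ultimately show ?thesis by blast
  qed
  have "(\<Sum>xs \<in> paths_from E x. path_weight w xs) =
      (\<Sum>y \<in> V - {x}. \<Sum>xs \<in> {xs \<in> paths_from E x. last xs = y}. path_weight w xs)"
  proof (rule sum.group[symmetric])
    show "finite (paths_from E x)"
      by (rule finite_subset[OF _ finite_dpaths[OF finE assms(3)]]) (auto simp: paths_from_def)
    show "finite (V - {x})" using assms(1) by blast
    show "last ` paths_from E x \<subseteq> V - {x}" using last by blast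
  qed
  also have "\<dots> = (\<Sum>y \<in> V - {x}. \<Sum>xs \<in> paths_between E x y. path_weight w xs)"
  proof (rule sum.cong[OF refl])
    fix y assume "y \<in> V - {x}"
    then show "(\<Sum>xs \<in> {xs \<in> paths_from E x. last xs = y}. path_weight w xs) =
               (\<Sum>xs \<in> paths_between E x y. path_weight w xs)"
      by (subst paths_between_eq_paths_from_last) auto
  qed
  finally show ?thesis .
qed

section \<open>The deterministic LT process\<close>

lemma lt_step_inflationary: "A \<subseteq> lt_step V E w \<theta> A"
  unfolding lt_step_def by blast

lemma lt_step_iff:
  "x \<in> lt_step V E w \<theta> A \<longleftrightarrow> x \<in> A \<or> x \<in> V \<and> \<theta> x \<le> (\<Sum>y \<in> In_nbrs E x \<inter> A. w (y, x))"
  unfolding lt_step_def by blast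

lemma lt_step_iterate_mono:
  "t \<le> s \<Longrightarrow> (lt_step V E w \<theta> ^^ t) S \<subseteq> (lt_step V E w \<theta> ^^ s) S"
  by (rule lift_Suc_mono_le[of "\<lambda>t. (lt_step V E w \<theta> ^^ t) S"]) (simp_all add: lt_step_inflationary)

lemma lt_final_subset:
  assumes "S \<subseteq> V"
  shows "lt_final V E w S \<theta> \<subseteq> V"
proof -
  have "(lt_step V E w \<theta> ^^ t) S \<subseteq> V" for t
    by (induction t) (use assms in \<open>auto simp: lt_step_def\<close>)
  then show ?thesis unfolding lt_final_def by blast
qed

lemma finite_subset_lt_final_iterate:
  assumes "finite B" "B \<subseteq> lt_final V E w S \<theta>"
  shows "\<exists>t. B \<subseteq> (lt_step V E w \<theta> ^^ t) S"
  using assms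
proof (induction B rule: finite_induct)
  case (insert x B)
  then obtain t where "B \<subseteq> (lt_step V E w \<theta> ^^ t) S" by blast
  moreover obtain s where "x \<in> (lt_step V E w \<theta> ^^ s) S"
    using insert.prems unfolding lt_final_def by blast
  ultimately have "insert x B \<subseteq> (lt_step V E w \<theta> ^^ max t s) S"
    using lt_step_iterate_mono[of t "max t s" V E w \<theta> S] lt_step_iterate_mono[of s "max t s" V E w \<theta> S]
    by auto
  then show ?case ..
qed simp

text \<open>For the backward direction, the finitely many active in-neighbours of x are all
active at some finite time, after which one more step activates x.\<close>
lemma lt_final_iff:
  assumes fin: "finite (In_nbrs E x)" and nonneg: "\<And>y. y \<in> In_nbrs E x \<Longrightarrow> 0 \<le> w (y, x)"
  shows "x \<in> lt_final V E w S \<theta> \<longleftrightarrow>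
           x \<in> S \<or> x \<in> V \<and> \<theta> x \<le> (\<Sum>y \<in> In_nbrs E x \<inter> lt_final V E w S \<theta>. w (y, x))"
    (is "_ \<longleftrightarrow> x \<in> S \<or> x \<in> V \<and> \<theta> x \<le> ?weight (lt_final V E w S \<theta>)")
proof
  have weight_mono: "?weight A \<le> ?weight B" if "A \<subseteq> B" for A B
    by (rule sum_mono2) (use fin nonneg that in auto)
  assume "x \<in> lt_final V E w S \<theta>"
  then obtain t where "x \<in> (lt_step V E w \<theta> ^^ t) S" unfolding lt_final_def by auto
  then show "x \<in> S \<or> x \<in> V \<and> \<theta> x \<le> ?weight (lt_final V E w S \<theta>)"
  proof (induction t)
    case (Suc t)
    have "(lt_step V E w \<theta> ^^ t) S \<subseteq> lt_final V E w S \<theta>" unfolding lt_final_def by blast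
    then have "?weight ((lt_step V E w \<theta> ^^ t) S) \<le> ?weight (lt_final V E w S \<theta>)"
      by (rule weight_mono)
    with Suc show ?case by (auto simp: lt_step_iff)
  qed simp
next
  assume x: "x \<in> S \<or> x \<in> V \<and> \<theta> x \<le> ?weight (lt_final V E w S \<theta>)"
  have "finite (In_nbrs E x \<inter> lt_final V E w S \<theta>)" using fin by simp
  then obtain t where t: "In_nbrs E x \<inter> lt_final V E w S \<theta> \<subseteq> (lt_step V E w \<theta> ^^ t) S"
    using finite_subset_lt_final_iterate by blast
  have "(lt_step V E w \<theta> ^^ t) S \<subseteq> lt_final V E w S \<theta>" unfolding lt_final_def by blast
  with t have "In_nbrs E x \<inter> lt_final V E w S \<theta> = In_nbrs E x \<inter> (lt_step V E w \<theta> ^^ t) S"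
    by blast
  then have "x \<in> (lt_step V E w \<theta> ^^ Suc t) S \<or> x \<in> (lt_step V E w \<theta> ^^ 0) S"
    using x by (auto simp: lt_step_iff)
  then show "x \<in> lt_final V E w S \<theta>" unfolding lt_final_def by blast
qed

abbreviation uniform01 :: "real measure" where
  "uniform01 \<equiv> uniform_measure lborel {0..1}"

lemma prob_space_uniform01: "prob_space uniform01"
  by (rule prob_space_uniform_measure) auto

lemma emeasure_uniform01_atMost:
  assumes "0 \<le> s" "s \<le> 1"
  shows "emeasure uniform01 {..s} = ennreal s"
proof -
  have "emeasure uniform01 {..s} = emeasure lborel ({0..1} \<inter> {..s}) / emeasure lborel {0..1::real}"
    by (rule emeasure_uniform_measure) auto
  also have "{0..1} \<inter> {..s} = {0..s}" using assms by auto
  finally show ?thesis using assms by (simp add: divide_ennreal_def)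
qed

lemma prob_space_threshold_space: "prob_space (threshold_space I)"
  unfolding threshold_space_def by (rule prob_space_PiM) (rule prob_space_uniform01)

lemma threshold_space_component_measurable:
  "(\<lambda>\<theta>. \<theta> z) \<in> borel_measurable (threshold_space I)"
proof (cases "z \<in> I")
  case True
  have "(\<lambda>\<theta>. \<theta> z) \<in> measurable (threshold_space I) uniform01"
    unfolding threshold_space_def using True by measurable
  then show ?thesis by (simp add: measurable_def)
next
  case False
  then show ?thesis
    by (subst measurable_cong[where g = "\<lambda>_. undefined"])
      (auto simp: threshold_space_def space_PiM)
qed

lemma nn_integral_threshold_space_insert:
  assumes "finite I" "v \<notin> I" "g \<in> borel_measurable (threshold_space (insert v I))"
  shows "integral\<^sup>N (threshold_space (insert v I)) g =
           (\<integral>\<^sup>+ \<theta>. (\<integral>\<^sup>+ c. g (\<theta>(v := c)) \<partial>uniform01) \<partial>threshold_space I)"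
  using assms unfolding threshold_space_def
  by (intro product_sigma_finite.product_nn_integral_insert)
    (simp_all add: product_sigma_finite_def prob_space_imp_sigma_finite prob_space_uniform01)

lemma nn_integral_threshold_space_insert_indep:
  assumes "finite I" "v \<notin> I" "g \<in> borel_measurable (threshold_space (insert v I))"
    and indep: "\<And>\<theta> c. g (\<theta>(v := c)) = g \<theta>"
  shows "integral\<^sup>N (threshold_space (insert v I)) g = integral\<^sup>N (threshold_space I) g"
  using nn_integral_threshold_space_insert[OF assms(1-3)] prob_space.emeasure_space_1[OF prob_space_uniform01]
  by (simp add: indep)

section \<open>Activation probabilities on a DAG\<close>

locale lt_dag =
  fixes V :: "'a set" and E :: "('a \<times> 'a) set" and w :: "'a \<times> 'a \<Rightarrow> real"
  assumes finite_V: "finite V"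
    and E_subset: "E \<subseteq> V \<times> V"
    and acyclic_E: "acyclic E"
    and w_nonneg: "\<And>e. e \<in> E \<Longrightarrow> 0 \<le> w e"
    and w_In_le_1: "\<And>v. v \<in> V \<Longrightarrow> (\<Sum>x \<in> In_nbrs E v. w (x, v)) \<le> 1"
begin

lemma finite_E: "finite E"
  using finite_V E_subset finite_subset by blast

lemma In_nbrs_subset: "In_nbrs E v \<subseteq> V"
  using E_subset unfolding In_nbrs_def by blast

lemma mem_lt_final_iff:
  "x \<in> lt_final V E w S \<theta> \<longleftrightarrow>
     x \<in> S \<or> x \<in> V \<and> \<theta> x \<le> (\<Sum>y \<in> In_nbrs E x \<inter> lt_final V E w S \<theta>. w (y, x))"
  by (rule lt_final_iff[OF finite_In_nbrs[OF finite_E]]) (simp add: w_nonneg In_nbrs_def)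

lemma lt_final_local:
  assumes "\<And>y. (y, x) \<in> E\<^sup>* \<Longrightarrow> \<theta>1 y = \<theta>2 y"
  shows "x \<in> lt_final V E w S \<theta>1 \<longleftrightarrow> x \<in> lt_final V E w S \<theta>2"
  using assms
proof (induction x rule: wf_induct_rule[OF finite_acyclic_wf[OF finite_E acyclic_E]])
  case (1 x)
  have "y \<in> lt_final V E w S \<theta>1 \<longleftrightarrow> y \<in> lt_final V E w S \<theta>2" if "y \<in> In_nbrs E x" for y
  proof (rule "1.IH")
    show "(y, x) \<in> E" using that by (simp add: In_nbrs_def)
    then show "\<theta>1 z = \<theta>2 z" if "(z, y) \<in> E\<^sup>*" for z
      using that "1.prems" by (meson rtrancl.rtrancl_into_rtrancl)
  qed
  then have "In_nbrs E x \<inter> lt_final V E w S \<theta>1 = In_nbrs E x \<inter> lt_final V E w S \<theta>2"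
    by blast
  moreover have "\<theta>1 x = \<theta>2 x" using "1.prems" by blast
  ultimately show ?case by (subst (1 2) mem_lt_final_iff) simp
qed

lemma lt_final_fun_upd_pred:
  assumes "(x, v) \<in> E"
  shows "x \<in> lt_final V E w S (\<theta>(v := c)) \<longleftrightarrow> x \<in> lt_final V E w S \<theta>"
proof (rule lt_final_local)
  fix z assume "(z, x) \<in> E\<^sup>*"
  then have "(z, v) \<in> E\<^sup>+" using assms by (rule rtrancl_into_trancl1)
  then have "z \<noteq> v" using acyclic_E unfolding acyclic_def by blast
  then show "(\<theta>(v := c)) z = \<theta> z" by simp
qed

lemma lt_final_measurable: "Measurable.pred (threshold_space I) (\<lambda>\<theta>. x \<in> lt_final V E w S \<theta>)"
proof -
  have "Measurable.pred (threshold_space I) (\<lambda>\<theta>. x \<in> (lt_step V E w \<theta> ^^ t) S)" for t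
  proof (induction t arbitrary: x)
    case (Suc t)
    note [measurable] = Suc threshold_space_component_measurable
    have weight: "(\<Sum>y \<in> In_nbrs E x \<inter> A. w (y, x)) = (\<Sum>y \<in> In_nbrs E x. if y \<in> A then w (y, x) else 0)" for A
      by (rule sum.inter_restrict[OF finite_In_nbrs[OF finite_E]])
    have "(\<lambda>\<theta>. \<Sum>y \<in> In_nbrs E x. if y \<in> (lt_step V E w \<theta> ^^ t) S then w (y, x) else 0)
        \<in> borel_measurable (threshold_space I)"
      by (intro borel_measurable_sum measurable_If) (auto intro: Suc)
    then have [measurable]: "Measurable.pred (threshold_space I)
        (\<lambda>\<theta>. \<theta> x \<le> (\<Sum>y \<in> In_nbrs E x. if y \<in> (lt_step V E w \<theta> ^^ t) S then w (y, x) else 0))"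
      unfolding pred_def by (rule borel_measurable_le[OF threshold_space_component_measurable])
    show ?case
      unfolding funpow.simps comp_def lt_step_iff weight by measurable
  qed simp
  note [measurable] = this
  have "(\<lambda>\<theta>. x \<in> lt_final V E w S \<theta>) = (\<lambda>\<theta>. \<exists>t. x \<in> (lt_step V E w \<theta> ^^ t) S)"
    unfolding lt_final_def by blast
  then show ?thesis by simp
qed

lemma lt_final_indicator_measurable:
  "(\<lambda>\<theta>. indicator {\<theta>. x \<in> lt_final V E w S \<theta>} \<theta> :: ennreal) \<in> borel_measurable (threshold_space I)"
proof -
  note [measurable] = lt_final_measurable
  have "(\<lambda>\<theta>. indicator {\<theta>. x \<in> lt_final V E w S \<theta>} \<theta> :: ennreal) =
      (\<lambda>\<theta>. if x \<in> lt_final V E w S \<theta> then 1 else 0)"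
    by (auto simp: indicator_def)
  then show ?thesis by simp
qed

definition activation_prob :: "'a set \<Rightarrow> 'a \<Rightarrow> real" where
  "activation_prob S x =
     measure (threshold_space V) {\<theta> \<in> space (threshold_space V). x \<in> lt_final V E w S \<theta>}"

lemma nn_integral_lt_final_indicator:
  "(\<integral>\<^sup>+ \<theta>. indicator {\<theta>. x \<in> lt_final V E w S \<theta>} \<theta> \<partial>threshold_space I) =
     emeasure (threshold_space I) {\<theta> \<in> space (threshold_space I). x \<in> lt_final V E w S \<theta>}"
proof -
  have "(\<integral>\<^sup>+ \<theta>. indicator {\<theta>. x \<in> lt_final V E w S \<theta>} \<theta> \<partial>threshold_space I) =
      integral\<^sup>N (threshold_space I) (indicator {\<theta> \<in> space (threshold_space I). x \<in> lt_final V E w S \<theta>})"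
    by (rule nn_integral_cong) (auto simp: indicator_def)
  also have "\<dots> = emeasure (threshold_space I) {\<theta> \<in> space (threshold_space I). x \<in> lt_final V E w S \<theta>}"
    using lt_final_measurable by (intro nn_integral_indicator) (rule predE)
  finally show ?thesis .
qed

lemma emeasure_activation_prob:
  "emeasure (threshold_space V) {\<theta> \<in> space (threshold_space V). x \<in> lt_final V E w S \<theta>} =
     ennreal (activation_prob S x)"
  unfolding activation_prob_def
  by (rule finite_measure.emeasure_eq_measure[OF prob_space.finite_measure[OF prob_space_threshold_space]])

lemma activation_prob_seed:
  assumes "x \<in> S"
  shows "activation_prob S x = 1"
proof -
  have "{\<theta> \<in> space (threshold_space V). x \<in> lt_final V E w S \<theta>} = space (threshold_space V)"
    using assms mem_lt_final_iff by blast
  then show ?thesis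
    unfolding activation_prob_def using prob_space.prob_space[OF prob_space_threshold_space] by simp
qed

text \<open>Conditioning on the thresholds of all other nodes: v then activates exactly when its
own uniform threshold lies below the total weight of its active in-neighbours, which by
acyclicity does not depend on the threshold of v.\<close>
lemma activation_prob_eq_nn_integral_active_weight:
  assumes "v \<in> V" "v \<notin> S"
  shows "ennreal (activation_prob S v) =
    (\<integral>\<^sup>+ \<theta>. ennreal (\<Sum>x \<in> In_nbrs E v \<inter> lt_final V E w S \<theta>. w (x, v)) \<partial>threshold_space (V - {v}))"
proof -
  define weight where "weight \<theta> = (\<Sum>x \<in> In_nbrs E v \<inter> lt_final V E w S \<theta>. w (x, v))" for \<theta>
  have weight_nonneg: "0 \<le> weight \<theta>" for \<theta>
    unfolding weight_def by (rule sum_nonneg) (auto simp: In_nbrs_def w_nonneg)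
  have "weight \<theta> \<le> (\<Sum>x \<in> In_nbrs E v. w (x, v))" for \<theta>
    unfolding weight_def
    by (rule sum_mono2[OF finite_In_nbrs[OF finite_E]]) (auto simp: In_nbrs_def w_nonneg)
  then have weight_le_1: "weight \<theta> \<le> 1" for \<theta>
    using w_In_le_1[OF assms(1)] order_trans by blast
  have weight_upd: "weight (\<theta>(v := c)) = weight \<theta>" for \<theta> c
    unfolding weight_def using lt_final_fun_upd_pred by (intro sum.cong) (auto simp: In_nbrs_def)
  have active_upd: "indicator {\<theta>. v \<in> lt_final V E w S \<theta>} (\<theta>(v := c)) = (indicator {..weight \<theta>} c :: ennreal)"
    for \<theta> c
    using mem_lt_final_iff[of v S "\<theta>(v := c)"] assms weight_upd[of \<theta> c]
    by (simp add: weight_def[symmetric] indicator_def)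
  have space_eq: "threshold_space V = threshold_space (insert v (V - {v}))"
    using assms(1) by (simp add: insert_absorb)
  have "ennreal (activation_prob S v) =
      (\<integral>\<^sup>+ \<theta>. indicator {\<theta>. v \<in> lt_final V E w S \<theta>} \<theta> \<partial>threshold_space V)"
    by (simp add: nn_integral_lt_final_indicator emeasure_activation_prob)
  also have "\<dots> = (\<integral>\<^sup>+ \<theta>. (\<integral>\<^sup>+ c. indicator {\<theta>. v \<in> lt_final V E w S \<theta>} (\<theta>(v := c)) \<partial>uniform01)
      \<partial>threshold_space (V - {v}))"
    unfolding space_eq using finite_V lt_final_indicator_measurable
    by (intro nn_integral_threshold_space_insert) auto
  also have "\<dots> = (\<integral>\<^sup>+ \<theta>. ennreal (weight \<theta>) \<partial>threshold_space (V - {v}))"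
    unfolding active_upd
    using emeasure_uniform01_atMost[OF weight_nonneg weight_le_1] by simp
  finally show ?thesis unfolding weight_def .
qed

lemma activation_prob_rec:
  assumes "v \<in> V" "v \<notin> S"
  shows "activation_prob S v = (\<Sum>x \<in> In_nbrs E v. w (x, v) * activation_prob S x)"
proof -
  let ?M = "threshold_space (V - {v})"
  let ?active = "\<lambda>x \<theta>. indicator {\<theta>. x \<in> lt_final V E w S \<theta>} \<theta> :: ennreal"
  have w_In_nonneg: "x \<in> In_nbrs E v \<Longrightarrow> 0 \<le> w (x, v)" for x
    by (simp add: In_nbrs_def w_nonneg)
  have "ennreal (\<Sum>x \<in> In_nbrs E v \<inter> lt_final V E w S \<theta>. w (x, v)) =
      (\<Sum>x \<in> In_nbrs E v. ennreal (w (x, v)) * ?active x \<theta>)" for \<theta>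
  proof -
    have "(\<Sum>x \<in> In_nbrs E v \<inter> lt_final V E w S \<theta>. w (x, v)) =
        (\<Sum>x \<in> In_nbrs E v. w (x, v) * indicator {\<theta>. x \<in> lt_final V E w S \<theta>} \<theta>)"
      unfolding sum.inter_restrict[OF finite_In_nbrs[OF finite_E]]
      by (intro sum.cong) (auto simp: indicator_def)
    also have "ennreal \<dots> = (\<Sum>x \<in> In_nbrs E v. ennreal (w (x, v) * indicator {\<theta>. x \<in> lt_final V E w S \<theta>} \<theta>))"
      using w_In_nonneg by (intro sum_ennreal[symmetric]) (auto simp: indicator_def)
    also have "\<dots> = (\<Sum>x \<in> In_nbrs E v. ennreal (w (x, v)) * ?active x \<theta>)"
      by (intro sum.cong refl) (auto simp: indicator_def)
    finally show ?thesis .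
  qed
  then have "ennreal (activation_prob S v) = (\<integral>\<^sup>+ \<theta>. (\<Sum>x \<in> In_nbrs E v. ennreal (w (x, v)) * ?active x \<theta>) \<partial>?M)"
    by (simp add: activation_prob_eq_nn_integral_active_weight[OF assms])
  also have "\<dots> = (\<Sum>x \<in> In_nbrs E v. ennreal (w (x, v)) * integral\<^sup>N ?M (?active x))"
    using lt_final_indicator_measurable by (simp add: nn_integral_sum nn_integral_cmult)
  also have "\<dots> = (\<Sum>x \<in> In_nbrs E v. ennreal (w (x, v)) * ennreal (activation_prob S x))"
  proof (rule sum.cong[OF refl])
    fix x assume "x \<in> In_nbrs E v"
    then have "?active x (\<theta>(v := c)) = ?active x \<theta>" for \<theta> c
      using lt_final_fun_upd_pred by (auto simp: In_nbrs_def indicator_def)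
    then have "integral\<^sup>N ?M (?active x) = integral\<^sup>N (threshold_space (insert v (V - {v}))) (?active x)"
      using finite_V lt_final_indicator_measurable
      by (intro nn_integral_threshold_space_insert_indep[symmetric]) auto
    also have "insert v (V - {v}) = V" using assms(1) by blast
    finally show "ennreal (w (x, v)) * integral\<^sup>N ?M (?active x) = ennreal (w (x, v)) * ennreal (activation_prob S x)"
      by (simp add: nn_integral_lt_final_indicator emeasure_activation_prob)
  qed
  also have "\<dots> = ennreal (\<Sum>x \<in> In_nbrs E v. w (x, v) * activation_prob S x)"
    using w_In_nonneg by (subst sum_ennreal[symmetric]) (auto simp: ennreal_mult activation_prob_def)
  finally show ?thesis
    using w_In_nonneg by (subst (asm) ennreal_inj) (auto intro!: sum_nonneg simp: activation_prob_def)
qed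

lemma lt_sigma_eq_sum_activation_prob:
  assumes "S \<subseteq> V"
  shows "lt_sigma V E w S = (\<Sum>v \<in> V - S. activation_prob S v)"
proof -
  let ?M = "threshold_space V"
  let ?event = "\<lambda>v. {\<theta> \<in> space ?M. v \<in> lt_final V E w S \<theta>}"
  have "real (card (lt_final V E w S \<theta> - S)) = (\<Sum>v \<in> V - S. indicator (?event v) \<theta>)"
    if "\<theta> \<in> space ?M" for \<theta>
  proof -
    have "lt_final V E w S \<theta> - S = (V - S) \<inter> lt_final V E w S \<theta>"
      using lt_final_subset[OF assms] by blast
    moreover have "real (card ((V - S) \<inter> lt_final V E w S \<theta>)) =
        (\<Sum>v \<in> V - S. indicator (lt_final V E w S \<theta>) v)"
      using finite_V by (simp add: indicator_def of_bool_def sum.If_cases)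
    moreover have "indicator (lt_final V E w S \<theta>) v = (indicator (?event v) \<theta> :: real)" for v
      using that by (simp add: indicator_def)
    ultimately show ?thesis by simp
  qed
  then have "lt_sigma V E w S = (\<integral>\<theta>. (\<Sum>v \<in> V - S. indicator (?event v) \<theta>) \<partial>?M)"
    unfolding lt_sigma_def by (rule Bochner_Integration.integral_cong[OF refl])
  also have "\<dots> = (\<Sum>v \<in> V - S. \<integral>\<theta>. indicator (?event v) \<theta> \<partial>?M)"
  proof (rule Bochner_Integration.integral_sum)
    fix v
    have "?event v \<in> sets ?M" using lt_final_measurable by (rule predE)
    then show "integrable ?M (indicator (?event v) :: _ \<Rightarrow> real)"
      using emeasure_activation_prob by (simp add: Int_absorb2)
  qed
  also have "\<dots> = (\<Sum>v \<in> V - S. activation_prob S v)"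
    by (simp add: activation_prob_def Int_absorb2)
  finally show ?thesis .
qed

lemma activation_prob_singleton_eq_sum_paths:
  assumes "v \<in> V"
  shows "activation_prob {u} v = (\<Sum>xs \<in> paths_between E u v. path_weight w xs)"
  using assms
proof (induction v rule: wf_induct_rule[OF finite_acyclic_wf[OF finite_E acyclic_E]])
  case (1 v)
  show ?case
  proof (cases "v = u")
    case True
    then show ?thesis by (simp add: activation_prob_seed paths_between_self[OF acyclic_E])
  next
    case False
    have "activation_prob {u} v = (\<Sum>x \<in> In_nbrs E v. w (x, v) * activation_prob {u} x)"
      using activation_prob_rec "1.prems" False by simp
    also have "\<dots> = (\<Sum>x \<in> In_nbrs E v. w (x, v) * (\<Sum>xs \<in> paths_between E u x. path_weight w xs))"
      using "1.IH" In_nbrs_subset by (intro sum.cong) (auto simp: In_nbrs_def)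
    also have "\<dots> = (\<Sum>xs \<in> paths_between E u v. path_weight w xs)"
      using sum_paths_between_snoc[OF finite_E acyclic_E False] by (rule sym)
    finally show ?thesis .
  qed
qed

end

theorem mainTheorem7:
  fixes V :: "'a set" and E :: "('a \<times> 'a) set" and w :: "'a \<times> 'a \<Rightarrow> real"
  assumes finV: "finite V"
    and EV: "E \<subseteq> V \<times> V"
    and dag: "acyclic E"
    and w_nonneg: "\<And>e. e \<in> E \<Longrightarrow> w e \<ge> 0"
    and w_in: "\<And>v. v \<in> V \<Longrightarrow> (\<Sum>x \<in> In_nbrs E v. w (x, v)) \<le> 1"
    and l: "l \<ge> longest_path_length E"
    and u: "u \<in> V"
  shows "easyim E w l u = lt_sigma V E w {u}
         \<and> lt_sigma V E w {u} =
             (\<Sum>xs \<in> {xs. dpath E xs \<and> hd xs = u \<and> length xs \<ge> 2}. path_weight w xs)"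
proof -
  interpret lt_dag V E w
    using finV EV dag w_nonneg w_in by unfold_locales
  have "lt_sigma V E w {u} = (\<Sum>v \<in> V - {u}. activation_prob {u} v)"
    using u by (simp add: lt_sigma_eq_sum_activation_prob)
  also have "\<dots> = (\<Sum>v \<in> V - {u}. \<Sum>xs \<in> paths_between E u v. path_weight w xs)"
    by (simp add: activation_prob_singleton_eq_sum_paths)
  also have "\<dots> = (\<Sum>xs \<in> paths_from E u. path_weight w xs)"
    using sum_paths_from_by_last[OF finV EV dag] by simp
  finally have "lt_sigma V E w {u} = (\<Sum>xs \<in> paths_from E u. path_weight w xs)" .
  moreover have "easyim E w l u = (\<Sum>xs \<in> paths_from E u. path_weight w xs)"
    using easyim_eq_sum_paths_from[OF finite_E dag l] .
  ultimately show ?thesis by (simp add: paths_from_def)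
qed

end
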